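(* For arbitrary probability distributions $P,Q$ on a common countable set with finite entropies, $$H\!\left(\frac{P+Q}{2}\right)-\frac{H(P)+H(Q)}{2}\ \ge\ d\!\left(\frac{1-d_{\mathrm{TV}}(P,Q)}{2}\,\Big\|\,\frac12\right),$$ and this lower bound is tight: for every $\varepsilon\in[0,1]$ there exist $P,Q$ with $d_{\mathrm{TV}}(P,Q)=\varepsilon$ attaining equality.
   Context: $H(P)=-\sum_x P(x)\log P(x)$ is the Shannon entropy; $d_{\mathrm{TV}}(P,Q)=\frac12\sum_x |P(x)-Q(x)|$; for $p,q\in[0,1]$, $d(p\|q)=p\log\frac pq+(1-p)\log\frac{1-p}{1-q}$ with $0\log0=0$. Logarithms are natural. *)

theory Defs
  imports "HOL-Probability.Probability"
begin

definition plogp :: "real \<Rightarrow> real" where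
  "plogp t = (if t = 0 then 0 else t * ln t)"

definition entropy :: "('a \<Rightarrow> real) \<Rightarrow> real" where
  "entropy p = - (\<Sum>\<^sub>\<infinity>x. plogp (p x))"

definition finite_entropy :: "('a \<Rightarrow> real) \<Rightarrow> bool" where
  "finite_entropy p \<longleftrightarrow> (\<lambda>x. plogp (p x)) summable_on UNIV"

definition tv_dist :: "'a pmf \<Rightarrow> 'a pmf \<Rightarrow> real" where
  "tv_dist P Q = (1/2) * (\<Sum>\<^sub>\<infinity>x. \<bar>pmf P x - pmf Q x\<bar>)"

definition bin_kl :: "real \<Rightarrow> real \<Rightarrow> real" where
  "bin_kl p q = (if p = 0 then 0 else p * ln (p / q))
              + (if 1 - p = 0 then 0 else (1 - p) * ln ((1 - p) / (1 - q)))"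

definition js_gap :: "'a pmf \<Rightarrow> 'a pmf \<Rightarrow> real" where
  "js_gap P Q = entropy (\<lambda>x. (pmf P x + pmf Q x) / 2)
                - (entropy (pmf P) + entropy (pmf Q)) / 2"

end

theory Submission
  imports Defs
begin

text \<open>
  Write a = P(x), b = Q(x) and
  \<delta> = d_TV(P,Q), \<alpha> = (1+\<delta>)/2, \<beta> = (1-\<delta>)/2.  The gap H((P+Q)/2) - (H(P)+H(Q))/2 is the
  sum over x of the pointwise Jensen gap of t \<mapsto> t ln t at a and b.  A two-point Gibbs
  inequality bounds each pointwise gap from below by
    (max(a,b) ln \<alpha> + min(a,b) ln \<beta> + (a+b) ln 2) / 2,
  and since max(a,b) sums to 2\<alpha> and min(a,b) to 2\<beta>, summing gives
  \<alpha> ln \<alpha> + \<beta> ln \<beta> + ln 2 = d(\<beta> || 1/2).  Equality holds for the two coins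
  (\<alpha>, \<beta>) and (\<beta>, \<alpha>) on {0,1}, where the Gibbs bound is attained pointwise.
\<close>

text \<open>Since ln 0 = 0 in HOL, the convention 0 log 0 = 0 is built in: plogp is just t ln t.\<close>
lemma plogp_eq: "plogp t = t * ln t"
  by (simp add: plogp_def)

lemma plogp_nonpos:
  assumes "0 \<le> t" "t \<le> 1"
  shows "plogp t \<le> 0"
  using assms by (cases "t = 0") (auto simp: plogp_eq intro: mult_nonneg_nonpos)

text \<open>Halving an argument shifts t ln t by t ln 2; this separates the ln 2 in the Jensen gap.\<close>
lemma plogp_half:
  assumes "t \<ge> 0"
  shows "plogp (t / 2) = plogp t / 2 - t / 2 * ln 2"
  using assms by (cases "t = 0") (auto simp: plogp_eq ln_div algebra_simps)

text \<open>Superadditivity of t ln t on the nonnegative reals (ln is monotone).\<close>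
lemma plogp_superadditive:
  fixes a b :: real
  assumes "a \<ge> 0" "b \<ge> 0"
  shows "plogp a + plogp b \<le> plogp (a + b)"
proof -
  have "a * ln a \<le> a * ln (a + b)" and "b * ln b \<le> b * ln (a + b)"
    using assms by (cases "a = 0"; cases "b = 0"; auto intro!: mult_left_mono)+
  then show ?thesis by (simp add: plogp_eq distrib_right)
qed

text \<open>The inequality ln y \<le> y - 1 at y = s\<gamma>/x, multiplied by x; the case x = 0 is covered
  by the convention 0 ln 0 = 0.\<close>
lemma weighted_ln_le:
  fixes x s \<gamma> :: real
  assumes "0 \<le> x" "x \<le> s" "0 \<le> \<gamma>" "\<gamma> = 0 \<Longrightarrow> x = 0"
  shows "x * ln \<gamma> \<le> x * ln x - x * ln s + s * \<gamma> - x"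
proof (cases "x = 0")
  case True
  then show ?thesis using assms by simp
next
  case False
  then have "\<gamma> \<noteq> 0" using assms(4) by blast
  then have pos: "x > 0" "s > 0" "\<gamma> > 0" using assms False by auto
  have "ln s + ln \<gamma> - ln x = ln (s * \<gamma> / x)"
    using pos by (simp add: ln_div ln_mult)
  also have "\<dots> \<le> s * \<gamma> / x - 1"
    using pos by (intro ln_le_minus_one) simp
  finally have "x * (ln s + ln \<gamma> - ln x) \<le> x * (s * \<gamma> / x - 1)"
    using pos by (intro mult_left_mono) auto
  then show ?thesis using pos by (simp add: algebra_simps)
qed

text \<open>Gibbs inequality for two points: the relative entropy of (a,b)/(a+b) with respect to
  a sub-probability vector (\<alpha>,\<beta>) is nonnegative, written without normalisation.\<close>
lemma gibbs_two_point:
  fixes a b \<alpha> \<beta> :: real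
  assumes "0 \<le> a" "0 \<le> b" "0 \<le> \<alpha>" "0 \<le> \<beta>" "\<alpha> + \<beta> \<le> 1"
    and "\<alpha> = 0 \<Longrightarrow> a = 0" "\<beta> = 0 \<Longrightarrow> b = 0"
  shows "a * ln \<alpha> + b * ln \<beta> \<le> plogp a + plogp b - plogp (a + b)"
proof -
  have "a * ln \<alpha> \<le> a * ln a - a * ln (a + b) + (a + b) * \<alpha> - a"
    and "b * ln \<beta> \<le> b * ln b - b * ln (a + b) + (a + b) * \<beta> - b"
    using assms by (intro weighted_ln_le; simp)+
  moreover have "(a + b) * (\<alpha> + \<beta>) \<le> a + b"
    using assms by (simp add: mult_left_le)
  ultimately show ?thesis by (simp add: plogp_eq algebra_simps)
qed

definition jensen_gap :: "real \<Rightarrow> real \<Rightarrow> real" where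
  "jensen_gap a b = (plogp a + plogp b) / 2 - plogp ((a + b) / 2)"

lemma jensen_gap_split:
  assumes "a \<ge> 0" "b \<ge> 0"
  shows "jensen_gap a b = (plogp a + plogp b - plogp (a + b)) / 2 + (a + b) / 2 * ln 2"
  using assms by (simp add: jensen_gap_def plogp_half field_simps)

text \<open>Upper bound by superadditivity; it makes the midpoint entropy summable.\<close>
lemma jensen_gap_le_ln2:
  assumes "a \<ge> 0" "b \<ge> 0"
  shows "jensen_gap a b \<le> (a + b) / 2 * ln 2"
  using plogp_superadditive[OF assms] by (simp add: jensen_gap_split[OF assms])

text \<open>Pointwise lower bound: Gibbs applied to the ordered pair (max a b, min a b).\<close>
lemma jensen_gap_lower:
  fixes a b \<alpha> \<beta> :: real
  assumes "0 \<le> a" "0 \<le> b" "0 < \<alpha>" "0 \<le> \<beta>" "\<alpha> + \<beta> \<le> 1"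
    and "\<beta> = 0 \<Longrightarrow> min a b = 0"
  shows "(max a b * ln \<alpha> + min a b * ln \<beta> + (a + b) * ln 2) / 2 \<le> jensen_gap a b"
proof -
  have sym: "plogp a + plogp b - plogp (a + b)
             = plogp (max a b) + plogp (min a b) - plogp (max a b + min a b)"
    by (cases "a \<le> b") (simp_all add: max_def min_def add.commute)
  have "max a b * ln \<alpha> + min a b * ln \<beta> \<le> plogp a + plogp b - plogp (a + b)"
    unfolding sym using assms by (intro gibbs_two_point) auto
  then show ?thesis using assms by (simp add: jensen_gap_split field_simps)
qed

lemma has_sum_diff:
  fixes f g :: "'a \<Rightarrow> 'b::topological_ab_group_add"
  assumes "(f has_sum a) A" "(g has_sum b) A"
  shows "((\<lambda>x. f x - g x) has_sum (a - b)) A"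
proof -
  have "((\<lambda>x. - g x) has_sum (- b)) A"
    using assms(2) by (simp add: has_sum_uminus)
  from has_sum_add[OF assms(1) this] show ?thesis by simp
qed

lemma has_sum_pmf: "(pmf P has_sum 1) UNIV"
proof -
  have "pmf P summable_on UNIV"
    using abs_summable_summable abs_summable_equivalent pmf_abs_summable by blast
  moreover have "infsum (pmf P) UNIV = 1"
    using infsetsum_infsum[of "pmf P" UNIV] infsetsum_pmf_eq_1[of P UNIV]
    by (simp add: pmf_abs_summable)
  ultimately show ?thesis by (simp add: has_sum_iff)
qed

lemma has_sum_abs_diff_pmf:
  "((\<lambda>x. \<bar>pmf P x - pmf Q x\<bar>) has_sum (2 * tv_dist P Q)) UNIV"
proof -
  have "(\<lambda>x. pmf P x - pmf Q x) summable_on UNIV"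
    using has_sum_diff[OF has_sum_pmf has_sum_pmf] summable_on_def by blast
  then have "(\<lambda>x. \<bar>pmf P x - pmf Q x\<bar>) summable_on UNIV"
    using summable_on_iff_abs_summable_on_real[of "\<lambda>x. pmf P x - pmf Q x" UNIV] by simp
  then show ?thesis by (simp add: has_sum_iff tv_dist_def)
qed

text \<open>Sum of the pointwise maximum: max a b = (a + b + |a - b|)/2.\<close>
lemma has_sum_max_pmf:
  "((\<lambda>x. max (pmf P x) (pmf Q x)) has_sum (1 + tv_dist P Q)) UNIV"
proof -
  have "max (pmf P x) (pmf Q x) = (pmf P x + pmf Q x + \<bar>pmf P x - pmf Q x\<bar>) / 2" for x
    by (simp add: max_def)
  then show ?thesis
    using has_sum_divide_const[OF has_sum_add[OF has_sum_add[OF has_sum_pmf[of P] has_sum_pmf[of Q]]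
        has_sum_abs_diff_pmf[of P Q]], where c = 2]
    by (simp add: add_divide_distrib)
qed

text \<open>Sum of the pointwise minimum (the overlap): min a b = (a + b - |a - b|)/2.\<close>
lemma has_sum_min_pmf:
  "((\<lambda>x. min (pmf P x) (pmf Q x)) has_sum (1 - tv_dist P Q)) UNIV"
proof -
  have "min (pmf P x) (pmf Q x) = (pmf P x + pmf Q x - \<bar>pmf P x - pmf Q x\<bar>) / 2" for x
    by (simp add: min_def)
  then show ?thesis
    using has_sum_divide_const[OF has_sum_diff[OF has_sum_add[OF has_sum_pmf[of P] has_sum_pmf[of Q]]
        has_sum_abs_diff_pmf[of P Q]], where c = 2]
    by (simp add: add_divide_distrib diff_divide_distrib)
qed

text \<open>Total variation lies in [0,1]: it is a sum of absolute values, and the overlap is nonnegative.\<close>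
lemma tv_dist_bounds: "0 \<le> tv_dist P Q" "tv_dist P Q \<le> 1"
proof -
  show "0 \<le> tv_dist P Q"
    using has_sum_nonneg[OF has_sum_abs_diff_pmf[of P Q]] by simp
  show "tv_dist P Q \<le> 1"
    using has_sum_nonneg[OF has_sum_min_pmf[of P Q]] by simp
qed

lemma min_pmf_vanishes:
  assumes "tv_dist P Q = 1"
  shows "min (pmf P x) (pmf Q x) = 0"
proof -
  have "sum (\<lambda>x. min (pmf P x) (pmf Q x)) {x} \<le> 1 - tv_dist P Q"
    by (rule finite_sum_le_has_sum[OF has_sum_min_pmf]) auto
  then have "min (pmf P x) (pmf Q x) \<le> 0"
    using assms by simp
  then show ?thesis by (intro antisym) simp_all
qed

lemma has_sum_entropy:
  assumes "finite_entropy p"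
  shows "((\<lambda>x. plogp (p x)) has_sum - entropy p) UNIV"
  using assms by (simp add: finite_entropy_def entropy_def has_sum_iff)

text \<open>The mixture (P+Q)/2 has finite entropy: its summands are squeezed between 0 and a
  summable bound coming from the upper bound on the Jensen gap.\<close>
lemma finite_entropy_midpoint:
  assumes "finite_entropy (pmf P)" "finite_entropy (pmf Q)"
  shows "finite_entropy (\<lambda>x. (pmf P x + pmf Q x) / 2)"
proof -
  let ?bound = "\<lambda>x. (pmf P x + pmf Q x) / 2 * ln 2 - (plogp (pmf P x) + plogp (pmf Q x)) / 2"
  have "?bound summable_on UNIV"
    using has_sum_diff[OF has_sum_cmult_left[OF has_sum_divide_const[OF
          has_sum_add[OF has_sum_pmf[of P] has_sum_pmf[of Q]], where c = 2], where c = "ln 2"]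
        has_sum_divide_const[OF has_sum_add[OF has_sum_entropy[OF assms(1)]
          has_sum_entropy[OF assms(2)]], where c = 2]]
    unfolding summable_on_def by blast
  moreover have "- plogp ((pmf P x + pmf Q x) / 2) \<le> ?bound x" for x
    using jensen_gap_le_ln2[OF pmf_nonneg pmf_nonneg, of P x Q x] unfolding jensen_gap_def by linarith
  moreover have "0 \<le> - plogp ((pmf P x + pmf Q x) / 2)" for x
    using pmf_le_1[of P x] pmf_le_1[of Q x] by (simp add: plogp_nonpos)
  ultimately have "(\<lambda>x. - plogp ((pmf P x + pmf Q x) / 2)) summable_on UNIV"
    by (rule summable_on_comparison_test)
  then show ?thesis
    unfolding finite_entropy_def summable_on_uminus .
qed

lemma has_sum_js_gap:
  assumes "finite_entropy (pmf P)" "finite_entropy (pmf Q)"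
  shows "((\<lambda>x. jensen_gap (pmf P x) (pmf Q x)) has_sum js_gap P Q) UNIV"
proof -
  have "((\<lambda>x. (plogp (pmf P x) + plogp (pmf Q x)) / 2 - plogp ((pmf P x + pmf Q x) / 2)) has_sum
        ((- entropy (pmf P) + - entropy (pmf Q)) / 2 - - entropy (\<lambda>x. (pmf P x + pmf Q x) / 2))) UNIV"
    by (intro has_sum_diff has_sum_divide_const has_sum_add has_sum_entropy
        finite_entropy_midpoint assms)
  moreover have "(- entropy (pmf P) + - entropy (pmf Q)) / 2 - - entropy (\<lambda>x. (pmf P x + pmf Q x) / 2)
      = js_gap P Q"
    unfolding js_gap_def by argo
  ultimately show ?thesis
    unfolding jensen_gap_def by simp
qed

lemma bin_kl_half:
  assumes "0 \<le> p" "p \<le> 1"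
  shows "bin_kl p (1/2) = plogp p + plogp (1 - p) + ln 2"
proof -
  have kl_summand: "(if t = 0 then 0 else t * ln (t / (1/2))) = plogp t + t * ln 2"
    if "0 \<le> t" for t :: real
    using that by (cases "t = 0") (simp_all add: plogp_eq ln_mult algebra_simps)
  have "1 - 1/2 = (1/2 :: real)" "0 \<le> 1 - p"
    using assms by simp_all
  then have "bin_kl p (1/2) = (plogp p + p * ln 2) + (plogp (1 - p) + (1 - p) * ln 2)"
    unfolding bin_kl_def using kl_summand assms by presburger
  then show ?thesis
    by (simp add: algebra_simps)
qed

text \<open>Lower bound: sum the pointwise bound, using that max and min sum to 2\<alpha> and 2\<beta>.\<close>
theorem js_gap_lower_bound:
  fixes P Q :: "'a pmf"
  assumes "finite_entropy (pmf P)" "finite_entropy (pmf Q)"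
  shows "bin_kl ((1 - tv_dist P Q) / 2) (1/2) \<le> js_gap P Q"
proof -
  define \<alpha> where "\<alpha> = (1 + tv_dist P Q) / 2"
  define \<beta> where "\<beta> = (1 - tv_dist P Q) / 2"
  have \<alpha>\<beta>: "0 < \<alpha>" "0 \<le> \<beta>" "\<alpha> + \<beta> = 1"
    using tv_dist_bounds[of P Q] by (simp_all add: \<alpha>_def \<beta>_def field_simps)
  have "2 * \<alpha> = 1 + tv_dist P Q" "2 * \<beta> = 1 - tv_dist P Q"
    by (simp_all add: \<alpha>_def \<beta>_def)
  then have "((\<lambda>x. max (pmf P x) (pmf Q x)) has_sum (2 * \<alpha>)) UNIV"
    and "((\<lambda>x. min (pmf P x) (pmf Q x)) has_sum (2 * \<beta>)) UNIV"
    using has_sum_max_pmf has_sum_min_pmf by simp_all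
  then have "((\<lambda>x. (max (pmf P x) (pmf Q x) * ln \<alpha> + min (pmf P x) (pmf Q x) * ln \<beta>
                         + (pmf P x + pmf Q x) * ln 2) / 2)
             has_sum ((2 * \<alpha> * ln \<alpha> + 2 * \<beta> * ln \<beta> + (1 + 1) * ln 2) / 2)) UNIV"
    by (intro has_sum_divide_const has_sum_add has_sum_cmult_left has_sum_pmf)
  then have "(2 * \<alpha> * ln \<alpha> + 2 * \<beta> * ln \<beta> + (1 + 1) * ln 2) / 2 \<le> js_gap P Q"
  proof (rule has_sum_mono[OF _ has_sum_js_gap[OF assms]])
    fix x
    have "\<beta> = 0 \<Longrightarrow> min (pmf P x) (pmf Q x) = 0"
      using min_pmf_vanishes by (simp add: \<beta>_def)
    then show "(max (pmf P x) (pmf Q x) * ln \<alpha> + min (pmf P x) (pmf Q x) * ln \<beta>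
                + (pmf P x + pmf Q x) * ln 2) / 2 \<le> jensen_gap (pmf P x) (pmf Q x)"
      using \<alpha>\<beta> by (intro jensen_gap_lower) auto
  qed
  moreover have "bin_kl ((1 - tv_dist P Q) / 2) (1/2) = plogp \<beta> + plogp \<alpha> + ln 2"
  proof -
    have "1 - \<beta> = \<alpha>" "\<beta> \<le> 1"
      using \<alpha>\<beta> by simp_all
    with bin_kl_half[of \<beta>] \<alpha>\<beta>(2) show ?thesis
      unfolding \<beta>_def[symmetric] by simp
  qed
  ultimately show ?thesis
    by (simp add: plogp_eq)
qed

definition coin :: "real \<Rightarrow> nat pmf" where
  "coin p = pmf_of_list [(0, p), (1, 1 - p)]"

lemma pmf_coin:
  assumes "0 \<le> p" "p \<le> 1"
  shows "pmf (coin p) n = (if n = 0 then p else if n = 1 then 1 - p else 0)"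
proof -
  have "pmf_of_list_wf [(0::nat, p), (1, 1 - p)]"
    using assms by (intro pmf_of_list_wfI) auto
  then show ?thesis
    unfolding coin_def by (simp add: pmf_pmf_of_list)
qed

lemma has_sum_bit:
  fixes f :: "nat \<Rightarrow> real"
  assumes "\<And>n. n \<ge> 2 \<Longrightarrow> f n = 0"
  shows "(f has_sum (f 0 + f 1)) UNIV"
  by (rule has_sum_finite_neutralI[of "{0, 1}"]) (use assms in auto)

text \<open>Tightness: the coins with biases (1+\<epsilon>)/2 and (1-\<epsilon>)/2 attain the bound, since then
  min a b / max a b = \<beta> / \<alpha> at both points and the Gibbs inequality is an equality.\<close>
theorem js_gap_bound_attained:
  assumes "0 \<le> \<epsilon>" "\<epsilon> \<le> 1"
  shows "\<exists>P Q :: nat pmf. finite_entropy (pmf P) \<and> finite_entropy (pmf Q) \<and>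
           tv_dist P Q = \<epsilon> \<and> js_gap P Q = bin_kl ((1 - tv_dist P Q) / 2) (1/2)"
proof (intro exI conjI)
  define p where "p = (1 + \<epsilon>) / 2"
  define P Q where "P = coin p" and "Q = coin (1 - p)"
  have p: "0 \<le> p" "p \<le> 1" "0 \<le> 1 - p" "1 - p \<le> 1"
    using assms by (simp_all add: p_def)
  have pmf_P: "pmf P n = (if n = 0 then p else if n = 1 then 1 - p else 0)"
   and pmf_Q: "pmf Q n = (if n = 0 then 1 - p else if n = 1 then p else 0)" for n
    using pmf_coin[OF p(1,2)] pmf_coin[OF p(3,4)] by (simp_all add: P_def Q_def)
  show fin: "finite_entropy (pmf P)" "finite_entropy (pmf Q)"
    unfolding finite_entropy_def summable_on_def
    by (rule exI, rule has_sum_bit, simp add: pmf_P pmf_Q plogp_def)+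
  have "((\<lambda>x. \<bar>pmf P x - pmf Q x\<bar>) has_sum 2 * \<epsilon>) UNIV"
    using has_sum_bit[of "\<lambda>x. \<bar>pmf P x - pmf Q x\<bar>"] assms
    by (simp add: pmf_P pmf_Q p_def)
  then show tv: "tv_dist P Q = \<epsilon>"
    using has_sum_unique[OF has_sum_abs_diff_pmf] by (metis mult_left_cancel zero_neq_numeral)
  have "((\<lambda>x. jensen_gap (pmf P x) (pmf Q x)) has_sum
          (jensen_gap (pmf P 0) (pmf Q 0) + jensen_gap (pmf P 1) (pmf Q 1))) UNIV"
    by (rule has_sum_bit) (simp add: pmf_P pmf_Q jensen_gap_def plogp_def)
  then have "js_gap P Q = jensen_gap (pmf P 0) (pmf Q 0) + jensen_gap (pmf P 1) (pmf Q 1)"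
    by (rule has_sum_unique[OF has_sum_js_gap[OF fin]])
  also have "\<dots> = jensen_gap p (1 - p) + jensen_gap (1 - p) p"
    by (simp add: pmf_P pmf_Q)
  also have "\<dots> = plogp (1 - p) + plogp p + ln 2"
    by (simp add: jensen_gap_def plogp_eq ln_div algebra_simps)
  also have "\<dots> = bin_kl (1 - p) (1/2)"
    using bin_kl_half[OF p(3,4)] by simp
  also have "1 - p = (1 - tv_dist P Q) / 2"
    using tv by (simp add: p_def field_simps)
  finally show "js_gap P Q = bin_kl ((1 - tv_dist P Q) / 2) (1/2)" .
qed

theorem corollary2:
  shows "(\<forall>P Q :: ('a::countable) pmf.
            finite_entropy (pmf P) \<and> finite_entropy (pmf Q) \<longrightarrow>
            js_gap P Q \<ge> bin_kl ((1 - tv_dist P Q) / 2) (1/2))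
       \<and> (\<forall>\<epsilon>::real. 0 \<le> \<epsilon> \<and> \<epsilon> \<le> 1 \<longrightarrow>
            (\<exists>P Q :: nat pmf. finite_entropy (pmf P) \<and> finite_entropy (pmf Q) \<and>
               tv_dist P Q = \<epsilon> \<and>
               js_gap P Q = bin_kl ((1 - tv_dist P Q) / 2) (1/2)))"
  using js_gap_lower_bound js_gap_bound_attained by blast

end
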